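(* Let $f(x,y)=\sum_{i,j=-\infty}^{\infty}\lambda(i,j)x^iy^j$ and $g(x,y)=\sum_{i,j=-\infty}^{\infty}c(i,j)x^iy^j$ be two nonzero bilateral formal series with $g(x,y)=-g(y,x)$. If $f\perp g$, then $g\perp g$.
   Context: A bilateral formal series in $x,y$ is a formal expression $\sum_{i,j\in\mathbb{Z}}c(i,j)x^iy^j$ with complex coefficients; $g(x,y)=-g(y,x)$ means $c(i,j)=-c(j,i)$ for all $i,j$. For two such series $f,g$, the expression $g(u,v)f(z,w)-g(u,w)f(z,v)+g(v,w)f(z,u)$ is a well-defined formal series in four independent variables $u,v,w,z$. One writes $f\perp g$ if this expression is identically zero. *)

theory Defs
  imports Complex_Main
begin

text \<open>A bilateral formal series in x,y is represented by its coefficient function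
  c :: int => int => complex, standing for sum over i,j of c(i,j) x^i y^j.\<close>

type_synonym bseries = "int \<Rightarrow> int \<Rightarrow> complex"

text \<open>Coefficient of u^a v^b z^c w^d in
  g(u,v)f(z,w) - g(u,w)f(z,v) + g(v,w)f(z,u).\<close>
definition perp_expr :: "bseries \<Rightarrow> bseries \<Rightarrow> int \<Rightarrow> int \<Rightarrow> int \<Rightarrow> int \<Rightarrow> complex" where
  "perp_expr f g a b c d = g a b * f c d - g a d * f c b + g b d * f c a"

definition perp :: "bseries \<Rightarrow> bseries \<Rightarrow> bool" where
  "perp f g \<longleftrightarrow> (\<forall>a b c d. perp_expr f g a b c d = 0)"

end

theory Submission
  imports Defs
begin

text \<open>Fix a coefficient \<open>f(c,e) \<noteq> 0\<close>. Reading off the coefficient of \<open>z\<^sup>c w\<^sup>e\<close> in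
  \<open>f \<perp> g\<close> expresses \<open>g\<close> as a wedge product \<open>g(a,b) = p(a) q(b) - p(b) q(a)\<close> with
  \<open>p(a) = g(a,e)/f(c,e)\<close> and \<open>q(b) = f(c,b)\<close>. Every wedge product is orthogonal to
  itself: this is the three-term Pluecker relation for a rank-two form.\<close>

definition wedge :: "(int \<Rightarrow> complex) \<Rightarrow> (int \<Rightarrow> complex) \<Rightarrow> bseries" where
  "wedge p q = (\<lambda>a b. p a * q b - p b * q a)"

lemma perp_wedge_self: "perp (wedge p q) (wedge p q)"
  unfolding perp_def perp_expr_def wedge_def by (simp add: algebra_simps)

lemma perp_imp_wedge:
  assumes "perp f g" and "f c e \<noteq> 0"
  shows "g = wedge (\<lambda>a. g a e / f c e) (f c)"
proof (intro ext)
  fix a b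
  have "g a b * f c e - g a e * f c b + g b e * f c a = 0"
    using assms(1) unfolding perp_def perp_expr_def by blast
  then show "g a b = wedge (\<lambda>a. g a e / f c e) (f c) a b"
    using assms(2) unfolding wedge_def by (simp add: field_simps)
qed

theorem lemma2p4:
  fixes f g :: bseries
  assumes "f \<noteq> (\<lambda>i j. 0)"
    and "g \<noteq> (\<lambda>i j. 0)"
    and "\<forall>i j. g i j = - g j i"
    and "perp f g"
  shows "perp g g"
proof -
  obtain c e where "f c e \<noteq> 0"
    using assms(1) by blast
  then have "g = wedge (\<lambda>a. g a e / f c e) (f c)"
    using assms(4) by (rule perp_imp_wedge[rotated])
  then show ?thesis
    by (metis perp_wedge_self)
qed

end
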